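(* Let $\tau,\nu$ be complex $n\times n$ matrices with $T=\sum_{j,k}\tau_{j,k}A_j^\dagger A_k$ and $V=\sum_{l,m}\nu_{l,m}N_lN_m$ Hermitian, set $H_0=V$, $H_1=T$, $\mu^0=\nu$, $\mu^1=\tau$, $H^0_{jk}=N_jN_k$, $H^1_{jk}=A_j^\dagger A_k$, and let $\boldsymbol\gamma=(\gamma_1,\dots,\gamma_{p+1})\in\{0,1\}^{p+1}$ with $|\boldsymbol\gamma|=\sum_q\gamma_q$. For each choice of index pairs $(j_q,k_q)$, $q=1,\dots,p+1$, fix an expansion of the nested commutator $[H^{\gamma_{p+1}}_{j_{p+1}k_{p+1}},\ldots[H^{\gamma_2}_{j_2k_2},H^{\gamma_1}_{j_1k_1}]]$ as a finite sum of terms ("fermionic paths") $P=(-1)^aY_1\cdots Y_r$, $a\in\{0,1\}$, each $Y_i$ one of $A_j^\dagger,A_k,N_l$ (the empty sum if the nested commutator is zero); write $P\rhd(H^{\gamma_{p+1}}_{j_{p+1}k_{p+1}},\ldots,H^{\gamma_1}_{j_1k_1})$ for the terms of this expansion. Then for $0\le\eta\le n$, $$\big\|[H_{\gamma_{p+1}},\cdots[H_{\gamma_2},H_{\gamma_1}]]\big\|_{\eta}\le\|\tau\|_{\max}^{|\boldsymbol\gamma|}\|\nu\|_{\max}^{p+1-|\boldsymbol\gamma|}\max_{\mathbf{c}_\eta}\deg(\mathbf{c}_\eta),$$ where $\mathbf{c}_\eta$ ranges over configurations in $\{0,1\}^n$ with exactly $\eta$ ones and $$\deg(\mathbf{c}_\eta)=\sum_{\langle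 j_{p+1},k_{p+1}\rangle}\cdots\sum_{\langle j_1,k_1\rangle}\ \sum_{P\rhd(H^{\gamma_{p+1}}_{j_{p+1}k_{p+1}},\ldots,H^{\gamma_1}_{j_1k_1})}\frac12\left(\|P|\mathbf{c}_\eta\rangle\|+\|P^\dagger|\mathbf{c}_\eta\rangle\|\right),$$ with each $\sum_{\langle j_q,k_q\rangle}$ ranging over the pairs $(j_q,k_q)$ such that $\mu^{\gamma_q}_{j_q,k_q}\neq0$.
   Context: Fermionic Fock space on $n$ spin orbitals: the $2^n$-dimensional Hilbert space with orthonormal computational basis $|\mathbf{c}\rangle=|c_0,\dots,c_{n-1}\rangle$. Creation operators: $A_j^\dagger|\dots,0_j,\dots\rangle=(-1)^{\sum_{k<j}c_k}|\dots,1_j,\dots\rangle$, $A_j^\dagger|\dots,1_j,\dots\rangle=0$; annihilation operators $A_j=(A_j^\dagger)^\dagger$; $N_l=A_l^\dagger A_l$, $N=\sum_lN_l$. The $\eta$-electron subspace is spanned by $|\mathbf{c}\rangle$ with $\sum_jc_j=\eta$; $\eta$-electron states are unit vectors in it. For $X$ commuting with $N$, $\|X\|_\eta=\max|\langle\phi_\eta|X|\psi_\eta\rangle|$ over $\eta$-electron states. $\|\cdot\|_{\max}$ is the largest absolute value of a matrix entry. *)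

theory Defs
  imports Complex_Main
begin

text \<open>A computational basis vector |c> is
  represented by the set S of occupied orbitals (S \<subseteq> {..<n}). Operators are
  represented by their matrix entries X S T = <S|X|T>, vectors by their coefficients.\<close>

type_synonym fop = "nat set \<Rightarrow> nat set \<Rightarrow> complex"
type_synonym fvec = "nat set \<Rightarrow> complex"

definition cre :: "nat \<Rightarrow> nat \<Rightarrow> fop" where
  "cre n j = (\<lambda>S' S. if S \<subseteq> {..<n} \<and> j < n \<and> j \<notin> S \<and> S' = insert j S
                      then (-1) ^ card {k\<in>S. k < j} else 0)"

definition fadj :: "fop \<Rightarrow> fop" where
  "fadj X = (\<lambda>S T. cnj (X T S))"

definition ann :: "nat \<Rightarrow> nat \<Rightarrow> fop" where
  "ann n j = fadj (cre n j)"

definition mmul :: "nat \<Rightarrow> fop \<Rightarrow> fop \<Rightarrow> fop" where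
  "mmul n X Y = (\<lambda>S T. \<Sum>U\<in>Pow {..<n}. X S U * Y U T)"

definition idop :: fop where
  "idop = (\<lambda>S T. if S = T then 1 else 0)"

definition num :: "nat \<Rightarrow> nat \<Rightarrow> fop" where
  "num n l = mmul n (cre n l) (ann n l)"

definition comm :: "nat \<Rightarrow> fop \<Rightarrow> fop \<Rightarrow> fop" where
  "comm n X Y = (\<lambda>S T. mmul n X Y S T - mmul n Y X S T)"

definition Top :: "nat \<Rightarrow> (nat \<Rightarrow> nat \<Rightarrow> complex) \<Rightarrow> fop" where
  "Top n \<tau> = (\<lambda>S T. \<Sum>j<n. \<Sum>k<n. \<tau> j k * mmul n (cre n j) (ann n k) S T)"

definition Vop :: "nat \<Rightarrow> (nat \<Rightarrow> nat \<Rightarrow> complex) \<Rightarrow> fop" where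
  "Vop n \<nu> = (\<lambda>S T. \<Sum>l<n. \<Sum>m<n. \<nu> l m * mmul n (num n l) (num n m) S T)"

text \<open>gamma = True stands for 1 (kinetic part T), False for 0 (potential part V).\<close>
definition Hgam :: "nat \<Rightarrow> (nat \<Rightarrow> nat \<Rightarrow> complex) \<Rightarrow> (nat \<Rightarrow> nat \<Rightarrow> complex) \<Rightarrow> bool \<Rightarrow> fop" where
  "Hgam n \<tau> \<nu> g = (if g then Top n \<tau> else Vop n \<nu>)"

definition mu :: "(nat \<Rightarrow> nat \<Rightarrow> complex) \<Rightarrow> (nat \<Rightarrow> nat \<Rightarrow> complex) \<Rightarrow> bool \<Rightarrow> nat \<Rightarrow> nat \<Rightarrow> complex" where
  "mu \<tau> \<nu> g = (if g then \<tau> else \<nu>)"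

definition Hjk :: "nat \<Rightarrow> bool \<Rightarrow> nat \<times> nat \<Rightarrow> fop" where
  "Hjk n g jk = (if g then mmul n (cre n (fst jk)) (ann n (snd jk))
                 else mmul n (num n (fst jk)) (num n (snd jk)))"

fun nest :: "nat \<Rightarrow> fop list \<Rightarrow> fop" where
  "nest n [] = (\<lambda>S T. 0)"
| "nest n [X] = X"
| "nest n (X # Y # Xs) = comm n X (nest n (Y # Xs))"

text \<open>Fermionic paths: (-1)^a Y_1 ... Y_r with Y_i among A_j^dag, A_k, N_l.\<close>
datatype letter = Cr nat | An nat | Nm nat

type_synonym fpath = "bool \<times> letter list"

fun letter_op :: "nat \<Rightarrow> letter \<Rightarrow> fop" where
  "letter_op n (Cr j) = cre n j"
| "letter_op n (An k) = ann n k"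
| "letter_op n (Nm l) = num n l"

definition path_op :: "nat \<Rightarrow> fpath \<Rightarrow> fop" where
  "path_op n P = (\<lambda>S T. (if fst P then -1 else 1) *
                   foldr (mmul n) (map (letter_op n) (snd P)) idop S T)"

definition opvec :: "nat \<Rightarrow> fop \<Rightarrow> fvec \<Rightarrow> fvec" where
  "opvec n X \<psi> = (\<lambda>S. \<Sum>T\<in>Pow {..<n}. X S T * \<psi> T)"

definition vnorm :: "nat \<Rightarrow> fvec \<Rightarrow> real" where
  "vnorm n \<psi> = sqrt (\<Sum>S\<in>Pow {..<n}. (cmod (\<psi> S))\<^sup>2)"

definition basis :: "nat set \<Rightarrow> fvec" where
  "basis c = (\<lambda>S. if S = c then 1 else 0)"

definition inner_f :: "nat \<Rightarrow> fvec \<Rightarrow> fvec \<Rightarrow> complex" where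
  "inner_f n \<phi> \<psi> = (\<Sum>S\<in>Pow {..<n}. cnj (\<phi> S) * \<psi> S)"

definition eta_states :: "nat \<Rightarrow> nat \<Rightarrow> fvec set" where
  "eta_states n \<eta> = {\<psi>. (\<forall>S. \<psi> S \<noteq> 0 \<longrightarrow> S \<subseteq> {..<n} \<and> card S = \<eta>) \<and> vnorm n \<psi> = 1}"

definition eta_norm :: "nat \<Rightarrow> nat \<Rightarrow> fop \<Rightarrow> real" where
  "eta_norm n \<eta> X = Sup {cmod (inner_f n \<phi> (opvec n X \<psi>)) | \<phi> \<psi>.
                          \<phi> \<in> eta_states n \<eta> \<and> \<psi> \<in> eta_states n \<eta>}"

definition maxnorm :: "nat \<Rightarrow> (nat \<Rightarrow> nat \<Rightarrow> complex) \<Rightarrow> real" where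
  "maxnorm n M = Max {cmod (M j k) | j k. j < n \<and> k < n}"

definition valid_idx :: "nat \<Rightarrow> bool list \<Rightarrow> (nat \<times> nat) list \<Rightarrow> bool" where
  "valid_idx n gs js = (length js = length gs \<and> (\<forall>jk\<in>set js. fst jk < n \<and> snd jk < n))"

text \<open>gs = [gamma_1, ..., gamma_{p+1}], js = [(j_1,k_1), ..., (j_{p+1},k_{p+1})];
  the nested commutator [H_{p+1}, ... [H_2, H_1]] is nest applied to the reversed list.\<close>
definition deg :: "nat \<Rightarrow> (nat \<Rightarrow> nat \<Rightarrow> complex) \<Rightarrow> (nat \<Rightarrow> nat \<Rightarrow> complex) \<Rightarrow> bool list
                   \<Rightarrow> ((nat \<times> nat) list \<Rightarrow> fpath list) \<Rightarrow> nat set \<Rightarrow> real" where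
  "deg n \<tau> \<nu> gs E c =
     (\<Sum>js \<in> {js. valid_idx n gs js \<and>
                 (\<forall>q<length gs. mu \<tau> \<nu> (gs ! q) (fst (js ! q)) (snd (js ! q)) \<noteq> 0)}.
        (\<Sum>P\<leftarrow>E js. (vnorm n (opvec n (path_op n P) (basis c))
                       + vnorm n (opvec n (fadj (path_op n P)) (basis c))) / 2))"

end

theory Submission
  imports Defs
begin

(* Expanding the nested commutator X multilinearly writes every matrix entry X S T as a sum,
   over index tuples with nonzero coefficients, of a coefficient product times a sum of
   fermionic paths; hence |X S T| <= |tau|_max^|gamma| |nu|_max^(p+1-|gamma|) W S T, where
   W S T is the total modulus of the path entries. X is Hermitian or anti-Hermitian, so W can
   be replaced by its symmetrisation. Every path operator has at most one nonzero entry in each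
   row and column, so the norms |P|c>| and |P^dag|c>| are absolute column and row sums, and
   deg c becomes the row sum at c of the symmetrised weight. The Schur test bounds the
   eta-norm by the largest such row sum. *)

lemma fadj_fadj [simp]: "fadj (fadj X) = X"
  by (simp add: fadj_def)

lemma fadj_mmul: "fadj (mmul n X Y) = mmul n (fadj Y) (fadj X)"
  unfolding fadj_def mmul_def by (auto simp: mult.commute intro: ext)

lemma fadj_comm: "fadj (comm n X Y) = - comm n (fadj X) (fadj Y)"
  unfolding comm_def by (auto simp: fadj_mmul[symmetric] intro!: ext) (simp add: fadj_def)

lemma comm_uminus_right: "comm n X (- Y) = - comm n X Y"
  unfolding comm_def mmul_def by (auto simp: sum_negf intro!: ext)

lemma fadj_nest:
  assumes "\<forall>X\<in>set L. fadj X = X"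
  shows "fadj (nest n L) = nest n L \<or> fadj (nest n L) = - nest n L"
  using assms
proof (induction n L rule: nest.induct)
  case (1 n)
  show ?case by (simp add: fadj_def)
next
  case (2 n X)
  then show ?case by simp
next
  case (3 n X Y Xs)
  have X: "fadj X = X" and "\<forall>Z\<in>set (Y # Xs). fadj Z = Z"
    using "3.prems" by simp_all
  with "3.IH" consider "fadj (nest n (Y # Xs)) = nest n (Y # Xs)"
    | "fadj (nest n (Y # Xs)) = - nest n (Y # Xs)" by blast
  then show ?case
  proof cases
    case 1
    then show ?thesis by (simp only: nest.simps fadj_comm X) simp
  next
    case 2
    then show ?thesis by (simp only: nest.simps fadj_comm X comm_uminus_right minus_minus) simp
  qed
qed

lemma cmod_nest_swap:
  assumes "\<forall>X\<in>set L. fadj X = X"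
  shows "cmod (nest n L S T) = cmod (nest n L T S)"
proof -
  have "fadj (nest n L) T S = nest n L T S \<or> fadj (nest n L) T S = - nest n L T S"
    using fadj_nest[OF assms, of n] by auto
  then have "cnj (nest n L S T) = nest n L T S \<or> cnj (nest n L S T) = - nest n L T S"
    by (simp only: fadj_def)
  then show ?thesis by (metis complex_mod_cnj norm_minus_cancel)
qed

lemma mmul_sum:
  assumes "finite A" "finite B"
  shows "mmul n (\<lambda>S T. \<Sum>a\<in>A. c a * F a S T) (\<lambda>S T. \<Sum>b\<in>B. d b * G b S T) S T
       = (\<Sum>a\<in>A. \<Sum>b\<in>B. c a * d b * mmul n (F a) (G b) S T)"
proof -
  have "mmul n (\<lambda>S T. \<Sum>a\<in>A. c a * F a S T) (\<lambda>S T. \<Sum>b\<in>B. d b * G b S T) S T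
     = (\<Sum>U\<in>Pow {..<n}. \<Sum>a\<in>A. \<Sum>b\<in>B. c a * d b * (F a S U * G b U T))"
    unfolding mmul_def by (simp add: sum_product mult_ac)
  also have "\<dots> = (\<Sum>a\<in>A. \<Sum>b\<in>B. \<Sum>U\<in>Pow {..<n}. c a * d b * (F a S U * G b U T))"
    by (subst sum.swap) (simp add: sum.swap[of _ "Pow {..<n}"])
  finally show ?thesis
    unfolding mmul_def by (simp add: sum_distrib_left)
qed

lemma comm_sum:
  assumes "finite A" "finite B"
  shows "comm n (\<lambda>S T. \<Sum>a\<in>A. c a * F a S T) (\<lambda>S T. \<Sum>b\<in>B. d b * G b S T) S T
       = (\<Sum>a\<in>A. \<Sum>b\<in>B. c a * d b * comm n (F a) (G b) S T)"
proof -
  have "mmul n (\<lambda>S T. \<Sum>b\<in>B. d b * G b S T) (\<lambda>S T. \<Sum>a\<in>A. c a * F a S T) S T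
     = (\<Sum>a\<in>A. \<Sum>b\<in>B. c a * d b * mmul n (G b) (F a) S T)"
    by (simp add: mmul_sum[OF assms(2,1)] sum.swap[of _ B] mult_ac)
  then show ?thesis
    unfolding comm_def by (simp add: mmul_sum[OF assms] sum_subtractf[symmetric] right_diff_distrib)
qed

lemma sum_lists_length_Suc:
  assumes "finite A"
  shows "(\<Sum>xs | set xs \<subseteq> A \<and> length xs = Suc m. f xs)
       = (\<Sum>x\<in>A. \<Sum>xs | set xs \<subseteq> A \<and> length xs = m. f (x # xs))"
proof -
  have "(\<Sum>xs | set xs \<subseteq> A \<and> length xs = Suc m. f xs)
      = (\<Sum>(xs, x)\<in>{xs. set xs \<subseteq> A \<and> length xs = m} \<times> A. f (x # xs))"
    unfolding lists_length_Suc_eq by (subst sum.reindex) (auto simp: inj_on_def case_prod_beta)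
  also have "\<dots> = (\<Sum>x\<in>A. \<Sum>xs | set xs \<subseteq> A \<and> length xs = m. f (x # xs))"
    by (simp add: sum.cartesian_product[symmetric] sum.swap[of _ A])
  finally show ?thesis .
qed

lemma nest_Cons: "nest n (X # Xs) = (if Xs = [] then X else comm n X (nest n Xs))"
  by (cases Xs) auto

lemma nest_map_sum_expand:
  assumes "finite I" and F: "\<And>g. F g = (\<lambda>S T. \<Sum>i\<in>I. c g i * h g i S T)"
  shows "nest n (map F gl) S T = (\<Sum>is | set is \<subseteq> I \<and> length is = length gl.
           prod_list (map2 c gl is) * nest n (map2 h gl is) S T)"
proof (induction gl arbitrary: S T)
  case Nil
  then show ?case by simp
next
  case (Cons g gl)
  show ?case
  proof (cases "gl = []")
    case True
    have "{is. set is \<subseteq> I \<and> length is = 0} = {[]}" by auto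
    with True show ?thesis by (simp add: sum_lists_length_Suc[OF \<open>finite I\<close>] F)
  next
    case False
    have "nest n (map F (g # gl)) S T = comm n (F g) (nest n (map F gl)) S T"
      using False by (simp add: nest_Cons)
    also have "\<dots> = (\<Sum>i\<in>I. \<Sum>is | set is \<subseteq> I \<and> length is = length gl.
        c g i * prod_list (map2 c gl is) * comm n (h g i) (nest n (map2 h gl is)) S T)"
      unfolding F[of g] Cons.IH[abs_def]
      by (rule comm_sum) (simp_all add: \<open>finite I\<close> finite_lists_length_eq)
    also have "\<dots> = (\<Sum>is | set is \<subseteq> I \<and> length is = length (g # gl).
        prod_list (map2 c (g # gl) is) * nest n (map2 h (g # gl) is) S T)"
      using False by (auto simp: sum_lists_length_Suc[OF \<open>finite I\<close>] nest_Cons intro!: sum.cong)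
    finally show ?thesis .
  qed
qed

lemma Hgam_eq_sum:
  "Hgam n \<tau> \<nu> g = (\<lambda>S T. \<Sum>jk\<in>{..<n} \<times> {..<n}. case_prod (mu \<tau> \<nu> g) jk * Hjk n g jk S T)"
  unfolding Hgam_def Top_def Vop_def mu_def Hjk_def
  by (cases g) (auto intro: ext simp: sum.cartesian_product case_prod_beta)

lemma nest_rev_Hgam_expand:
  "nest n (rev (map (Hgam n \<tau> \<nu>) gs)) S T = (\<Sum>js | valid_idx n gs js.
     prod_list (map2 (\<lambda>g. case_prod (mu \<tau> \<nu> g)) gs js) * nest n (rev (map2 (Hjk n) gs js)) S T)"
proof -
  let ?c = "\<lambda>g. case_prod (mu \<tau> \<nu> g)" and ?I = "{..<n} \<times> {..<n}"
  have "nest n (rev (map (Hgam n \<tau> \<nu>) gs)) S T = nest n (map (Hgam n \<tau> \<nu>) (rev gs)) S T"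
    by (simp add: rev_map)
  also have "\<dots> = (\<Sum>js | set js \<subseteq> ?I \<and> length js = length gs.
      prod_list (map2 ?c (rev gs) js) * nest n (map2 (Hjk n) (rev gs) js) S T)"
    by (simp add: nest_map_sum_expand[OF _ Hgam_eq_sum])
  also have "\<dots> = (\<Sum>js | set js \<subseteq> ?I \<and> length js = length gs.
      prod_list (map2 ?c (rev gs) (rev js)) * nest n (map2 (Hjk n) (rev gs) (rev js)) S T)"
    by (rule sum.reindex_bij_witness[of _ rev rev]) auto
  also have "\<dots> = (\<Sum>js | valid_idx n gs js.
      prod_list (map2 ?c gs js) * nest n (rev (map2 (Hjk n) gs js)) S T)"
    by (intro sum.cong) (auto simp: valid_idx_def zip_rev rev_map[symmetric])
  finally show ?thesis .
qed

lemma finite_valid_idx: "finite {js. valid_idx n gs js}"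
proof -
  have "{js. valid_idx n gs js} = {js. set js \<subseteq> {..<n} \<times> {..<n} \<and> length js = length gs}"
    by (auto simp: valid_idx_def)
  then show ?thesis by (simp add: finite_lists_length_eq)
qed

definition nz_idx :: "nat \<Rightarrow> (nat \<Rightarrow> nat \<Rightarrow> complex) \<Rightarrow> (nat \<Rightarrow> nat \<Rightarrow> complex) \<Rightarrow> bool list
                       \<Rightarrow> (nat \<times> nat) list set" where
  "nz_idx n \<tau> \<nu> gs = {js. valid_idx n gs js \<and>
                      (\<forall>q<length gs. mu \<tau> \<nu> (gs ! q) (fst (js ! q)) (snd (js ! q)) \<noteq> 0)}"

lemma nest_rev_Hgam_eq_paths:
  assumes paths: "\<forall>js. valid_idx n gs js \<longrightarrow>
           (\<lambda>S T. \<Sum>P\<leftarrow>E js. path_op n P S T) = nest n (rev (map2 (Hjk n) gs js))"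
  shows "nest n (rev (map (Hgam n \<tau> \<nu>) gs)) S T = (\<Sum>js\<in>nz_idx n \<tau> \<nu> gs.
           prod_list (map2 (\<lambda>g. case_prod (mu \<tau> \<nu> g)) gs js) * (\<Sum>P\<leftarrow>E js. path_op n P S T))"
proof -
  let ?c = "\<lambda>js. prod_list (map2 (\<lambda>g. case_prod (mu \<tau> \<nu> g)) gs js)"
  have "nest n (rev (map (Hgam n \<tau> \<nu>) gs)) S T
      = (\<Sum>js | valid_idx n gs js. ?c js * nest n (rev (map2 (Hjk n) gs js)) S T)"
    by (rule nest_rev_Hgam_expand)
  also have "\<dots> = (\<Sum>js | valid_idx n gs js. ?c js * (\<Sum>P\<leftarrow>E js. path_op n P S T))"
  proof (intro sum.cong refl)
    fix js assume "js \<in> {js. valid_idx n gs js}"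
    with paths have "(\<lambda>S T. \<Sum>P\<leftarrow>E js. path_op n P S T) = nest n (rev (map2 (Hjk n) gs js))"
      by blast
    then show "?c js * nest n (rev (map2 (Hjk n) gs js)) S T = ?c js * (\<Sum>P\<leftarrow>E js. path_op n P S T)"
      by (metis (no_types))
  qed
  also have "\<dots> = (\<Sum>js\<in>nz_idx n \<tau> \<nu> gs. ?c js * (\<Sum>P\<leftarrow>E js. path_op n P S T))"
  proof (rule sum.mono_neutral_right[OF finite_valid_idx])
    show "nz_idx n \<tau> \<nu> gs \<subseteq> {js. valid_idx n gs js}"
      by (auto simp: nz_idx_def)
    have "?c js = 0" if "js \<in> {js. valid_idx n gs js} - nz_idx n \<tau> \<nu> gs" for js
    proof -
      from that obtain q where "q < length gs" "length js = length gs"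
        and "mu \<tau> \<nu> (gs ! q) (fst (js ! q)) (snd (js ! q)) = 0"
        by (auto simp: nz_idx_def valid_idx_def)
      then have "map2 (\<lambda>g. case_prod (mu \<tau> \<nu> g)) gs js ! q = 0"
        and "q < length (map2 (\<lambda>g. case_prod (mu \<tau> \<nu> g)) gs js)"
        by (simp_all add: case_prod_beta)
      then have "0 \<in> set (map2 (\<lambda>g. case_prod (mu \<tau> \<nu> g)) gs js)"
        by (metis nth_mem)
      then show ?thesis by (simp add: prod_list_zero_iff)
    qed
    then show "\<forall>js\<in>{js. valid_idx n gs js} - nz_idx n \<tau> \<nu> gs.
                 ?c js * (\<Sum>P\<leftarrow>E js. path_op n P S T) = 0" by simp
  qed
  finally show ?thesis .
qed

lemma maxnorm_ge: "j < n \<Longrightarrow> k < n \<Longrightarrow> cmod (M j k) \<le> maxnorm n M"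
proof -
  assume "j < n" "k < n"
  have "{cmod (M j k) |j k. j < n \<and> k < n} = (\<lambda>(j, k). cmod (M j k)) ` ({..<n} \<times> {..<n})"
    by force
  then show ?thesis
    unfolding maxnorm_def using \<open>j < n\<close> \<open>k < n\<close> by (intro Max_ge) auto
qed

lemma maxnorm_nonneg: "0 < n \<Longrightarrow> 0 \<le> maxnorm n M"
  using maxnorm_ge[of 0 n 0 M] by (meson norm_ge_zero order_trans)

lemma norm_prod_mu_le:
  assumes "0 < n" and "valid_idx n gs js"
  shows "cmod (prod_list (map2 (\<lambda>g. case_prod (mu \<tau> \<nu> g)) gs js))
           \<le> (\<Prod>g\<leftarrow>gs. maxnorm n (mu \<tau> \<nu> g))"
  using assms(2)
proof (induction gs arbitrary: js)
  case Nil
  then show ?case by simp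
next
  case (Cons g gs)
  then obtain j k js' where js: "js = (j, k) # js'" "j < n" "k < n" "valid_idx n gs js'"
    by (cases js) (auto simp: valid_idx_def)
  have "cmod (mu \<tau> \<nu> g j k) \<le> maxnorm n (mu \<tau> \<nu> g)"
    using js by (intro maxnorm_ge)
  with Cons.IH[OF js(4)] show ?case
    unfolding js by (simp add: norm_mult mult_mono maxnorm_nonneg[OF assms(1)])
qed

lemma prod_list_maxnorm_mu:
  "(\<Prod>g\<leftarrow>gs. maxnorm n (mu \<tau> \<nu> g))
     = maxnorm n \<tau> ^ length (filter id gs) * maxnorm n \<nu> ^ (length gs - length (filter id gs))"
proof (induction gs)
  case Nil
  then show ?case by simp
next
  case (Cons g gs)
  have "length (filter id gs) \<le> length gs" by (rule length_filter_le)
  with Cons show ?case by (cases g) (auto simp: mu_def Suc_diff_le mult_ac)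
qed

lemma prod_list_maxnorm_mu_nonneg: "0 < n \<Longrightarrow> 0 \<le> (\<Prod>g\<leftarrow>gs. maxnorm n (mu \<tau> \<nu> g))"
  by (rule prod_list_nonneg) (auto simp: maxnorm_nonneg)

lemma norm_sum_list_le: "norm (\<Sum>x\<leftarrow>xs. f x) \<le> (\<Sum>x\<leftarrow>xs. norm (f x))"
  by (induction xs) (auto intro: order_trans[OF norm_triangle_ineq])

definition path_weight :: "nat \<Rightarrow> (nat \<Rightarrow> nat \<Rightarrow> complex) \<Rightarrow> (nat \<Rightarrow> nat \<Rightarrow> complex) \<Rightarrow> bool list
                           \<Rightarrow> ((nat \<times> nat) list \<Rightarrow> fpath list) \<Rightarrow> nat set \<Rightarrow> nat set \<Rightarrow> real" where
  "path_weight n \<tau> \<nu> gs E S T = (\<Sum>js\<in>nz_idx n \<tau> \<nu> gs. \<Sum>P\<leftarrow>E js. cmod (path_op n P S T))"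

lemma nest_rev_Hgam_entry_le:
  assumes "0 < n"
    and paths: "\<forall>js. valid_idx n gs js \<longrightarrow>
           (\<lambda>S T. \<Sum>P\<leftarrow>E js. path_op n P S T) = nest n (rev (map2 (Hjk n) gs js))"
  shows "cmod (nest n (rev (map (Hgam n \<tau> \<nu>) gs)) S T)
           \<le> (\<Prod>g\<leftarrow>gs. maxnorm n (mu \<tau> \<nu> g)) * path_weight n \<tau> \<nu> gs E S T"
proof -
  let ?c = "\<lambda>js. prod_list (map2 (\<lambda>g. case_prod (mu \<tau> \<nu> g)) gs js)"
  let ?B = "\<Prod>g\<leftarrow>gs. maxnorm n (mu \<tau> \<nu> g)"
  have "cmod (nest n (rev (map (Hgam n \<tau> \<nu>) gs)) S T)
      \<le> (\<Sum>js\<in>nz_idx n \<tau> \<nu> gs. cmod (?c js) * cmod (\<Sum>P\<leftarrow>E js. path_op n P S T))"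
    unfolding nest_rev_Hgam_eq_paths[OF paths] norm_mult[symmetric] by (rule norm_sum)
  also have "\<dots> \<le> (\<Sum>js\<in>nz_idx n \<tau> \<nu> gs. ?B * (\<Sum>P\<leftarrow>E js. cmod (path_op n P S T)))"
    using prod_list_maxnorm_mu_nonneg[OF assms(1)]
    by (intro sum_mono mult_mono norm_prod_mu_le norm_sum_list_le assms(1)) (auto simp: nz_idx_def)
  finally show ?thesis
    by (simp add: path_weight_def sum_distrib_left)
qed

definition col_single :: "nat \<Rightarrow> fop \<Rightarrow> bool" where
  "col_single n M \<longleftrightarrow>
     (\<forall>T. \<forall>S1\<in>Pow {..<n}. \<forall>S2\<in>Pow {..<n}. M S1 T \<noteq> 0 \<longrightarrow> M S2 T \<noteq> 0 \<longrightarrow> S1 = S2)"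

definition monomial_op :: "nat \<Rightarrow> fop \<Rightarrow> bool" where
  "monomial_op n M \<longleftrightarrow> col_single n M \<and> col_single n (fadj M)"

lemma monomial_op_fadj: "monomial_op n (fadj M) \<longleftrightarrow> monomial_op n M"
  by (auto simp: monomial_op_def)

lemma mmul_nonzeroE:
  assumes "mmul n X Y S T \<noteq> 0"
  obtains U where "U \<in> Pow {..<n}" "X S U \<noteq> 0" "Y U T \<noteq> 0"
  using assms unfolding mmul_def by (metis (no_types, lifting) mult_zero_left mult_zero_right sum.neutral)

lemma col_single_mmul:
  assumes "col_single n X" and "col_single n Y"
  shows "col_single n (mmul n X Y)"
  unfolding col_single_def
proof (intro allI ballI impI)
  fix T S1 S2 assume "S1 \<in> Pow {..<n}" "S2 \<in> Pow {..<n}"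
    and "mmul n X Y S1 T \<noteq> 0" "mmul n X Y S2 T \<noteq> 0"
  moreover obtain U1 where "U1 \<in> Pow {..<n}" "X S1 U1 \<noteq> 0" "Y U1 T \<noteq> 0"
    using \<open>mmul n X Y S1 T \<noteq> 0\<close> by (rule mmul_nonzeroE)
  moreover obtain U2 where "U2 \<in> Pow {..<n}" "X S2 U2 \<noteq> 0" "Y U2 T \<noteq> 0"
    using \<open>mmul n X Y S2 T \<noteq> 0\<close> by (rule mmul_nonzeroE)
  ultimately show "S1 = S2"
    using assms unfolding col_single_def by metis
qed

lemma monomial_op_mmul: "monomial_op n X \<Longrightarrow> monomial_op n Y \<Longrightarrow> monomial_op n (mmul n X Y)"
  by (simp add: monomial_op_def fadj_mmul col_single_mmul)

lemma monomial_op_cre: "monomial_op n (cre n j)"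
  unfolding monomial_op_def col_single_def fadj_def cre_def by (auto split: if_splits)

lemma monomial_op_path_op: "monomial_op n (path_op n P)"
proof -
  have letter: "monomial_op n (letter_op n y)" for y
    by (cases y) (simp_all add: ann_def num_def monomial_op_fadj monomial_op_cre monomial_op_mmul)
  have "monomial_op n idop"
    by (auto simp: monomial_op_def col_single_def fadj_def idop_def)
  then have "monomial_op n (foldr (mmul n) (map (letter_op n) ys) idop)" for ys
    by (induction ys) (simp_all add: letter monomial_op_mmul)
  then show ?thesis
    unfolding path_op_def monomial_op_def col_single_def fadj_def by auto
qed

lemma sqrt_sum_norm_sq_single:
  fixes g :: "'a \<Rightarrow> 'b::real_normed_vector"
  assumes "finite A" and "\<forall>x\<in>A. \<forall>y\<in>A. g x \<noteq> 0 \<longrightarrow> g y \<noteq> 0 \<longrightarrow> x = y"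
  shows "sqrt (\<Sum>x\<in>A. (norm (g x))\<^sup>2) = (\<Sum>x\<in>A. norm (g x))"
proof (cases "\<exists>x\<in>A. g x \<noteq> 0")
  case True
  then obtain x0 where x0: "x0 \<in> A" "g x0 \<noteq> 0" by blast
  with assms(2) have "\<forall>y\<in>A - {x0}. g y = 0" by blast
  then show ?thesis
    by (simp add: sum.remove[OF assms(1) x0(1)])
next
  case False
  then show ?thesis by simp
qed

lemma vnorm_opvec_basis:
  assumes "T \<in> Pow {..<n}" and "col_single n M"
  shows "vnorm n (opvec n M (basis T)) = (\<Sum>S\<in>Pow {..<n}. cmod (M S T))"
proof -
  have "opvec n M (basis T) = (\<lambda>S. M S T)"
    unfolding opvec_def basis_def using assms(1)
    by (auto intro!: ext simp: if_distrib cong: if_cong)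
  then show ?thesis
    unfolding vnorm_def using assms(2)
    by (simp add: sqrt_sum_norm_sq_single col_single_def)
qed

lemma vnorm_opvec_fadj_basis:
  assumes "S \<in> Pow {..<n}" and "col_single n (fadj M)"
  shows "vnorm n (opvec n (fadj M) (basis S)) = (\<Sum>T\<in>Pow {..<n}. cmod (M S T))"
  using vnorm_opvec_basis[OF assms] by (simp add: fadj_def)

lemma sum_list_divide_distrib:
  fixes f :: "'a \<Rightarrow> 'b::field"
  shows "(\<Sum>x\<leftarrow>xs. f x / c) = (\<Sum>x\<leftarrow>xs. f x) / c"
  by (induction xs) (simp_all add: add_divide_distrib)

lemma sum_sum_list_swap: "(\<Sum>x\<in>A. \<Sum>y\<leftarrow>ys. f x y) = (\<Sum>y\<leftarrow>ys. \<Sum>x\<in>A. f x y)"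
  by (induction ys) (auto simp: sum.distrib)

lemma deg_eq_path_weight:
  assumes "c \<in> Pow {..<n}"
  shows "deg n \<tau> \<nu> gs E c = ((\<Sum>S\<in>Pow {..<n}. path_weight n \<tau> \<nu> gs E S c)
                            + (\<Sum>T\<in>Pow {..<n}. path_weight n \<tau> \<nu> gs E c T)) / 2"
proof -
  have "(\<Sum>S\<in>Pow {..<n}. path_weight n \<tau> \<nu> gs E S c)
      = (\<Sum>js\<in>nz_idx n \<tau> \<nu> gs. \<Sum>P\<leftarrow>E js. vnorm n (opvec n (path_op n P) (basis c)))"
    using assms monomial_op_path_op unfolding path_weight_def monomial_op_def
    by (subst sum.swap) (simp add: sum_sum_list_swap vnorm_opvec_basis)
  moreover have "(\<Sum>T\<in>Pow {..<n}. path_weight n \<tau> \<nu> gs E c T)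
      = (\<Sum>js\<in>nz_idx n \<tau> \<nu> gs. \<Sum>P\<leftarrow>E js. vnorm n (opvec n (fadj (path_op n P)) (basis c)))"
    using assms monomial_op_path_op unfolding path_weight_def monomial_op_def
    by (subst sum.swap) (simp add: sum_sum_list_swap vnorm_opvec_fadj_basis)
  ultimately show ?thesis
    unfolding deg_def nz_idx_def[symmetric] sum_list_divide_distrib sum_list_addf
    by (simp add: sum.distrib flip: sum_divide_distrib)
qed

lemma schur_test:
  fixes X :: "'a \<Rightarrow> 'a \<Rightarrow> complex" and K :: "'a \<Rightarrow> 'a \<Rightarrow> real"
  assumes "finite I"
    and entries: "\<And>S T. S \<in> I \<Longrightarrow> T \<in> I \<Longrightarrow> cmod (X S T) \<le> K S T"
    and rows: "\<And>S. S \<in> I \<Longrightarrow> \<phi> S \<noteq> 0 \<Longrightarrow> (\<Sum>T\<in>I. K S T) \<le> D"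
    and cols: "\<And>T. T \<in> I \<Longrightarrow> \<psi> T \<noteq> 0 \<Longrightarrow> (\<Sum>S\<in>I. K S T) \<le> D"
  shows "cmod (\<Sum>S\<in>I. cnj (\<phi> S) * (\<Sum>T\<in>I. X S T * \<psi> T))
           \<le> D * ((\<Sum>S\<in>I. (cmod (\<phi> S))\<^sup>2) + (\<Sum>T\<in>I. (cmod (\<psi> T))\<^sup>2)) / 2"
proof -
  define u where "u S = cmod (\<phi> S)" for S
  define v where "v T = cmod (\<psi> T)" for T
  have K_nonneg: "0 \<le> K S T" if "S \<in> I" "T \<in> I" for S T
    using entries[OF that] norm_ge_zero order_trans by blast
  have row: "cmod (\<Sum>T\<in>I. X S T * \<psi> T) \<le> (\<Sum>T\<in>I. K S T * v T)" if "S \<in> I" for S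
  proof -
    have "cmod (\<Sum>T\<in>I. X S T * \<psi> T) \<le> (\<Sum>T\<in>I. cmod (X S T) * v T)"
      unfolding v_def norm_mult[symmetric] by (rule norm_sum)
    also have "\<dots> \<le> (\<Sum>T\<in>I. K S T * v T)"
      using that by (intro sum_mono mult_right_mono entries) (auto simp: v_def)
    finally show ?thesis .
  qed
  have "cmod (\<Sum>S\<in>I. cnj (\<phi> S) * (\<Sum>T\<in>I. X S T * \<psi> T))
      \<le> (\<Sum>S\<in>I. u S * cmod (\<Sum>T\<in>I. X S T * \<psi> T))"
    unfolding u_def by (rule order_trans[OF norm_sum]) (simp add: norm_mult)
  also have "\<dots> \<le> (\<Sum>S\<in>I. u S * (\<Sum>T\<in>I. K S T * v T))"
    by (intro sum_mono mult_left_mono row) (auto simp: u_def)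
  also have "\<dots> = (\<Sum>S\<in>I. \<Sum>T\<in>I. K S T * (u S * v T))"
    by (simp add: sum_distrib_left mult_ac)
  also have "\<dots> \<le> (\<Sum>S\<in>I. \<Sum>T\<in>I. ((u S)\<^sup>2 * K S T + (v T)\<^sup>2 * K S T) / 2)"
  proof (intro sum_mono)
    fix S T assume "S \<in> I" "T \<in> I"
    have "u S * v T \<le> ((u S)\<^sup>2 + (v T)\<^sup>2) / 2"
      using sum_squares_bound[of "u S" "v T"] by simp
    then have "K S T * (u S * v T) \<le> K S T * (((u S)\<^sup>2 + (v T)\<^sup>2) / 2)"
      using K_nonneg[OF \<open>S \<in> I\<close> \<open>T \<in> I\<close>] by (rule mult_left_mono)
    then show "K S T * (u S * v T) \<le> ((u S)\<^sup>2 * K S T + (v T)\<^sup>2 * K S T) / 2"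
      by (simp add: algebra_simps)
  qed
  also have "\<dots> = ((\<Sum>S\<in>I. (u S)\<^sup>2 * (\<Sum>T\<in>I. K S T)) + (\<Sum>T\<in>I. (v T)\<^sup>2 * (\<Sum>S\<in>I. K S T))) / 2"
    unfolding sum_divide_distrib[symmetric] sum.distrib sum_distrib_left
    by (subst (2) sum.swap) (rule refl)
  also have "\<dots> \<le> ((\<Sum>S\<in>I. (u S)\<^sup>2 * D) + (\<Sum>T\<in>I. (v T)\<^sup>2 * D)) / 2"
  proof -
    have weighted: "(cmod z)\<^sup>2 * a \<le> (cmod z)\<^sup>2 * D" if "z \<noteq> 0 \<Longrightarrow> a \<le> D" for z a
      using that by (cases "z = 0") (auto intro: mult_left_mono)
    show ?thesis
      unfolding u_def v_def using rows cols
      by (intro divide_right_mono add_mono sum_mono weighted) auto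
  qed
  finally show ?thesis
    by (simp add: u_def v_def sum_distrib_right[symmetric] mult.commute[of D] distrib_right)
qed

lemma eta_norm_le:
  assumes "\<eta> \<le> n"
    and "\<And>\<phi> \<psi>. \<phi> \<in> eta_states n \<eta> \<Longrightarrow> \<psi> \<in> eta_states n \<eta> \<Longrightarrow>
           cmod (inner_f n \<phi> (opvec n X \<psi>)) \<le> C"
  shows "eta_norm n \<eta> X \<le> C"
proof -
  have "{..<\<eta>} \<in> Pow {..<n}" using assms(1) by auto
  moreover have "(\<lambda>S. (cmod (basis {..<\<eta>} S))\<^sup>2) = (\<lambda>S. if S = {..<\<eta>} then 1 else 0)"
    by (auto simp: basis_def)
  ultimately have "vnorm n (basis {..<\<eta>}) = 1"
    unfolding vnorm_def by (simp only:) simp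
  then have "basis {..<\<eta>} \<in> eta_states n \<eta>"
    using assms(1) by (auto simp: eta_states_def basis_def)
  then show ?thesis
    unfolding eta_norm_def using assms(2) by (intro cSup_least) auto
qed

theorem proposition11:
  fixes n \<eta> :: nat and \<tau> \<nu> :: "nat \<Rightarrow> nat \<Rightarrow> complex" and gs :: "bool list"
    and E :: "(nat \<times> nat) list \<Rightarrow> fpath list"
  assumes "0 < n" and "\<eta> \<le> n" and "gs \<noteq> []"
    and "fadj (Top n \<tau>) = Top n \<tau>" and "fadj (Vop n \<nu>) = Vop n \<nu>"
    and "\<forall>js. valid_idx n gs js \<longrightarrow>
           (\<lambda>S T. \<Sum>P\<leftarrow>E js. path_op n P S T) = nest n (rev (map2 (Hjk n) gs js))"
    and "\<forall>js. valid_idx n gs js \<longrightarrow> nest n (rev (map2 (Hjk n) gs js)) = (\<lambda>S T. 0) \<longrightarrow> E js = []"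
  shows "eta_norm n \<eta> (nest n (rev (map (Hgam n \<tau> \<nu>) gs)))
         \<le> maxnorm n \<tau> ^ length (filter id gs) * maxnorm n \<nu> ^ (length gs - length (filter id gs))
           * Max {deg n \<tau> \<nu> gs E c | c. c \<subseteq> {..<n} \<and> card c = \<eta>}"
proof -
  let ?X = "nest n (rev (map (Hgam n \<tau> \<nu>) gs))" and ?W = "path_weight n \<tau> \<nu> gs E"
  define B where "B = (\<Prod>g\<leftarrow>gs. maxnorm n (mu \<tau> \<nu> g))"
  define D where "D = Max {deg n \<tau> \<nu> gs E c | c. c \<subseteq> {..<n} \<and> card c = \<eta>}"
  define K where "K S T = B * ((?W S T + ?W T S) / 2)" for S T
  have "0 \<le> B"
    unfolding B_def using assms(1) by (rule prod_list_maxnorm_mu_nonneg)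
  have "\<forall>Y\<in>set (rev (map (Hgam n \<tau> \<nu>) gs)). fadj Y = Y"
    using assms(4,5) by (auto simp: Hgam_def)
  then have entries: "cmod (?X S T) \<le> K S T" for S T
    using nest_rev_Hgam_entry_le[OF assms(1,6), of \<tau> \<nu> S T]
      nest_rev_Hgam_entry_le[OF assms(1,6), of \<tau> \<nu> T S] cmod_nest_swap[of _ n S T]
    by (simp add: K_def B_def field_simps)
  have "(\<Sum>T\<in>Pow {..<n}. K c T) = B * deg n \<tau> \<nu> gs E c"
    "(\<Sum>T\<in>Pow {..<n}. K T c) = B * deg n \<tau> \<nu> gs E c" if "c \<subseteq> {..<n}" for c
    using that unfolding K_def sum_distrib_left[symmetric] sum_divide_distrib[symmetric] sum.distrib
    by (simp_all add: deg_eq_path_weight add.commute)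
  moreover have "deg n \<tau> \<nu> gs E c \<le> D" if "c \<subseteq> {..<n}" "card c = \<eta>" for c
    unfolding D_def using that
    by (intro Max_ge) (auto intro: finite_subset[of _ "deg n \<tau> \<nu> gs E ` Pow {..<n}"])
  ultimately have "(\<Sum>T\<in>Pow {..<n}. K c T) \<le> B * D" "(\<Sum>T\<in>Pow {..<n}. K T c) \<le> B * D"
    if "c \<subseteq> {..<n}" "card c = \<eta>" for c
    using that \<open>0 \<le> B\<close> by (simp_all add: mult_left_mono)
  then have "cmod (inner_f n \<phi> (opvec n ?X \<psi>)) \<le> B * D"
    if "\<phi> \<in> eta_states n \<eta>" "\<psi> \<in> eta_states n \<eta>" for \<phi> \<psi>
    using schur_test[of "Pow {..<n}" ?X K \<phi> "B * D" \<psi>] entries that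
    by (simp add: inner_f_def opvec_def eta_states_def vnorm_def)
  then show ?thesis
    unfolding D_def B_def prod_list_maxnorm_mu[symmetric] by (rule eta_norm_le[OF assms(2)])
qed

end
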